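(* Let $\mathcal A,\mathcal B>0$, $\alpha,\beta\in(0,1)$, $h,\tau>0$, and for a real number $\theta$ let $s=\sin^2(\theta h/2)$, $$\mathcal Q=\Big[1-\tfrac{8}{45}s^2\Big]+4g_0^{(\alpha,\beta)}s\Big[1+\tfrac13 s\Big],\qquad \mathcal P=\Big[1-\tfrac{8}{45}s^2\Big]-4g_1^{(\alpha,\beta)}s\Big[1+\tfrac13 s\Big].$$ Then $\left|\mathcal P/\mathcal Q\right|\le1$ for every real $\theta$.
   Context: $\varpi_\ell^{(\sigma)}=(-1)^\ell\binom{\sigma}{\ell}$, $g_0^{(\sigma)}=\frac{1+\sigma}{2}\varpi_0^{(\sigma)}$, $g_\ell^{(\sigma)}=\frac{1+\sigma}{2}\varpi_\ell^{(\sigma)}+\frac{1-\sigma}{2}\varpi_{\ell-1}^{(\sigma)}$ ($\ell\ge1$); $\mu_\alpha=\tau^\alpha\mathcal A/h^2$, $\mu_\beta=\tau^\beta\mathcal B/h^2$, $g_\ell^{(\alpha,\beta)}=\mu_\alpha g_\ell^{(1-\alpha)}+\mu_\beta g_\ell^{(1-\beta)}$. *)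

theory Defs
  imports Complex_Main
begin

definition varpi :: "real \<Rightarrow> nat \<Rightarrow> real" where
  "varpi \<sigma> l = (-1) ^ l * (\<sigma> gchoose l)"

definition gw :: "real \<Rightarrow> nat \<Rightarrow> real" where
  "gw \<sigma> l = (if l = 0 then (1 + \<sigma>) / 2 * varpi \<sigma> 0
              else (1 + \<sigma>) / 2 * varpi \<sigma> l + (1 - \<sigma>) / 2 * varpi \<sigma> (l - 1))"

definition gab :: "real \<Rightarrow> real \<Rightarrow> real \<Rightarrow> real \<Rightarrow> real \<Rightarrow> real \<Rightarrow> nat \<Rightarrow> real" where
  "gab A B \<alpha> \<beta> h \<tau> l =
     (\<tau> powr \<alpha> * A / h^2) * gw (1 - \<alpha>) l + (\<tau> powr \<beta> * B / h^2) * gw (1 - \<beta>) l"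

end

theory Submission
  imports Defs
begin

text \<open>With \<open>a = 1 - 8 s\<^sup>2/45 > 0\<close> and \<open>b = 4 s (1 + s/3) \<ge> 0\<close> the ratio is
  \<open>(a - g\<^sub>1 b) / (a + g\<^sub>0 b)\<close>, so it suffices that \<open>\<bar>g\<^sub>1\<bar> \<le> g\<^sub>0\<close>. For the
  weights of a single exponent \<open>0 \<le> \<sigma> \<le> 1\<close> this holds because
  \<open>g\<^sub>0 + g\<^sub>1 = (1 - \<sigma>)(2 + \<sigma>)/2\<close> and \<open>g\<^sub>0 - g\<^sub>1 = \<sigma>(3 + \<sigma>)/2\<close>; the combined
  weights \<open>gab\<close> are a positive combination of two such sequences.\<close>

lemma gw_0: "gw \<sigma> 0 = (1 + \<sigma>) / 2"
  by (simp add: gw_def varpi_def)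

lemma gw_1: "gw \<sigma> 1 = (1 - 2 * \<sigma> - \<sigma>\<^sup>2) / 2"
  by (simp add: gw_def varpi_def gbinomial_1 field_simps power2_eq_square)

lemma gw_0_pos: "\<sigma> > -1 \<Longrightarrow> gw \<sigma> 0 > 0"
  by (simp add: gw_0)

lemma abs_gw_1_le_gw_0:
  assumes "0 \<le> \<sigma>" "\<sigma> \<le> 1"
  shows "\<bar>gw \<sigma> 1\<bar> \<le> gw \<sigma> 0"
proof -
  have "gw \<sigma> 0 + gw \<sigma> 1 = (1 - \<sigma>) * (2 + \<sigma>) / 2"
    unfolding gw_0 gw_1 by (simp add: field_simps power2_eq_square)
  also have "\<dots> \<ge> 0"
    using assms by simp
  finally have "gw \<sigma> 0 + gw \<sigma> 1 \<ge> 0" .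
  moreover have "gw \<sigma> 0 - gw \<sigma> 1 = \<sigma> * (3 + \<sigma>) / 2"
    unfolding gw_0 gw_1 by (simp add: field_simps power2_eq_square)
  moreover have "\<dots> \<ge> 0"
    using assms by simp
  ultimately show ?thesis
    by (simp add: abs_le_iff)
qed

lemma abs_combination_le:
  fixes p q x y u v :: real
  assumes "p \<ge> 0" "q \<ge> 0" "\<bar>x\<bar> \<le> u" "\<bar>y\<bar> \<le> v"
  shows "\<bar>p * x + q * y\<bar> \<le> p * u + q * v"
proof -
  have "\<bar>p * x + q * y\<bar> \<le> p * \<bar>x\<bar> + q * \<bar>y\<bar>"
    using assms(1,2) abs_triangle_ineq[of "p * x" "q * y"] by (simp add: abs_mult)
  also have "\<dots> \<le> p * u + q * v"
    using assms by (intro add_mono mult_left_mono) auto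
  finally show ?thesis .
qed

context
  fixes A B \<alpha> \<beta> h \<tau> :: real
  assumes A: "A > 0" and B: "B > 0" and \<alpha>: "0 < \<alpha>" "\<alpha> < 1" and \<beta>: "0 < \<beta>" "\<beta> < 1"
    and h: "h > 0" and \<tau>: "\<tau> > 0"
begin

lemma gab_0_pos: "gab A B \<alpha> \<beta> h \<tau> 0 > 0"
  unfolding gab_def using A B \<alpha> \<beta> h \<tau>
  by (intro add_pos_pos mult_pos_pos gw_0_pos divide_pos_pos) auto

lemma abs_gab_1_le_gab_0: "\<bar>gab A B \<alpha> \<beta> h \<tau> 1\<bar> \<le> gab A B \<alpha> \<beta> h \<tau> 0"
  unfolding gab_def using A B \<alpha> \<beta> h \<tau>
  by (intro abs_combination_le abs_gw_1_le_gw_0) auto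

end

lemma abs_ratio_le_1:
  fixes a b g\<^sub>0 g\<^sub>1 :: real
  assumes "a > 0" "b \<ge> 0" "\<bar>g\<^sub>1\<bar> \<le> g\<^sub>0"
  shows "\<bar>(a - g\<^sub>1 * b) / (a + g\<^sub>0 * b)\<bar> \<le> 1"
proof -
  have "\<bar>g\<^sub>1 * b\<bar> \<le> g\<^sub>0 * b"
    using assms(2,3) by (simp add: abs_mult mult_right_mono)
  then have "\<bar>a - g\<^sub>1 * b\<bar> \<le> a + g\<^sub>0 * b" and "a + g\<^sub>0 * b > 0"
    using assms(1) by (auto simp: abs_le_iff)
  then show ?thesis
    by (simp add: abs_divide)
qed

theorem lemma5:
  fixes A B \<alpha> \<beta> h \<tau> \<theta> :: real
  assumes "A > 0" "B > 0" "0 < \<alpha>" "\<alpha> < 1" "0 < \<beta>" "\<beta> < 1" "h > 0" "\<tau> > 0"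
  shows "let s = (sin (\<theta> * h / 2))^2;
             Q = (1 - 8/45 * s^2) + 4 * gab A B \<alpha> \<beta> h \<tau> 0 * s * (1 + s/3);
             P = (1 - 8/45 * s^2) - 4 * gab A B \<alpha> \<beta> h \<tau> 1 * s * (1 + s/3)
         in \<bar>P / Q\<bar> \<le> 1"
proof -
  define s where "s = (sin (\<theta> * h / 2))^2"
  have s: "0 \<le> s" "s \<le> 1"
    unfolding s_def by (simp_all add: abs_square_le_1)
  then have "s\<^sup>2 \<le> 1"
    by (simp add: power_le_one)
  have ratio: "\<bar>((1 - 8/45 * s^2) - gab A B \<alpha> \<beta> h \<tau> 1 * (4 * s * (1 + s/3)))
          / ((1 - 8/45 * s^2) + gab A B \<alpha> \<beta> h \<tau> 0 * (4 * s * (1 + s/3)))\<bar> \<le> 1"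
    using s \<open>s\<^sup>2 \<le> 1\<close> assms by (intro abs_ratio_le_1 abs_gab_1_le_gab_0) auto
  have regroup: "4 * g * s * (1 + s/3) = g * (4 * s * (1 + s/3))" for g :: real
    by simp
  show ?thesis
    using ratio unfolding Let_def s_def[symmetric] regroup .
qed

end
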